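(* Under the hypotheses of the context, let $U$ be an integer with $U\delta\ge\bot_0+D+1$. Then for every process $p$, in the configuration $\gamma_{t_{p,U\delta+\varrho}}$ (i.e., at $p$'s event in the cut $C_{U\delta+\varrho}$), $p.v_2=\bigoplus\{q.v_0: q\in V(p,\varrho)\}$, the infimum of the registers $v_0$ over the $\varrho$-ball centered at $p$.
   Context: Let $G=(V,E)$ be a finite connected undirected graph, $|V|=n\ge 2$, $\mathcal N_p$ the set of neighbors of $p$, $d(p,q)$ the hop distance, $D$ the diameter, and $V(p,r)=\{q\in V: d(p,q)\le r\}$. Fix integers $\varrho\ge1$, $\delta=\varrho+1$, and $M\ge3$ a multiple of $\delta$; for an integer $a$, $\bar a\in\{0,\dots,M-1\}$ is its residue modulo $M$. Each process $p$ holds a clock $p.r\in\{0,\dots,M-1\}$; $p^t.r$ is its value in $\gamma_t$. Integers $a,b$ are locally comparable if $\min(\overline{a-b},\overline{b-a})\le1$, and then $b\ominus a=\overline{b-a}$ if $\overline{b-a}\le1$, else $-\overline{a-b}$. $WU$: for every edge $\{p,q\}$, $p.r,q.r$ are locally comparable. The delay of a path $p_0\ldots p_k$ is $\sum_{i<k}(p_{i+1}.r\ominus p_i.r)$. $WU_0$: $WU$ holds and all paths between any $p,q$ have the same delay $\delta_{(p,q)}$ ($\delta^t_{(p,q)}$ in $\gamma_t$). Let $\oplus$ be an associative, commutative, idempotent binary operation on a set $\mathbb S$; $\bigoplus$ of a finite nonempty set is the $\oplus$ of its elements. Each process $p$ has registers $p.v_0,p.v_1,p.v_2\in\mathbb S$,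 where $p.v_0$ is never modified. Dynamics: $p$ is enabled iff for every $q\in\mathcal N_p$, $q.r=p.r$ or $q.r=\overline{p.r+1}$. In a transition $\gamma_t\to\gamma_{t+1}$ a nonempty set of processes enabled in $\gamma_t$ is chosen (by an arbitrary daemon); each chosen $p$, reading the values of $\gamma_t$, does: if $p.r\equiv\varrho \pmod\delta$ then $p.v_1:=p.v_0$, $p.v_2:=p.v_0$; otherwise $p.v_1:=p.v_2$ and $p.v_2:=p.v_0\oplus\bigoplus\{q.v_{\omega(q)}:q\in\mathcal N_p\}$, where $\omega(q)=2$ if $q.r=p.r$ and $\omega(q)=1$ if $q.r=\overline{p.r+1}$; then $p.r:=\overline{p.r+1}$. Other processes are unchanged. Standing hypotheses: the execution $\gamma_0\gamma_1\ldots$ is infinite, $\gamma_0$ satisfies $WU_0$, and every process increments its clock infinitely often. Lifting: choose $p_0$ with $\delta^0_{(p_0,q)}\ge0$ for all $q$, let $\bot_0=p_0^0.r$, set $\widetilde{p^0.r}=\bot_0+\delta^0_{(p_0,p)}$, and $\widetilde{p^{t+1}.r}=\widetilde{p^t.r}+1$ if $p$ increments in $\gamma_t\to\gamma_{t+1}$, else $\widetilde{p^{t+1}.r}=\widetilde{p^t.r}$. For an integer $k$, $t_{p,k}$ is the smallest $t$ with $\widetilde{p^t.r}=k$, and $C_k=\{(p,t_{p,k}):p\in V\}$. *)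

theory Defs
  imports Main
begin

text \<open>Graph: vertices are the elements of a finite type 'v (so V = UNIV),
  adjacency is a symmetric irreflexive relation E.\<close>

definition walk_betw :: "('v \<Rightarrow> 'v \<Rightarrow> bool) \<Rightarrow> 'v \<Rightarrow> 'v list \<Rightarrow> 'v \<Rightarrow> bool" where
  "walk_betw E p xs q \<longleftrightarrow> xs \<noteq> [] \<and> hd xs = p \<and> last xs = q \<and> successively E xs"

definition hop_dist :: "('v \<Rightarrow> 'v \<Rightarrow> bool) \<Rightarrow> 'v \<Rightarrow> 'v \<Rightarrow> nat" where
  "hop_dist E p q = (LEAST k. \<exists>xs. walk_betw E p xs q \<and> length xs = Suc k)"

definition diameter :: "('v \<Rightarrow> 'v \<Rightarrow> bool) \<Rightarrow> nat" where
  "diameter E = Max {hop_dist E p q | p q. True}"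

definition ballV :: "('v \<Rightarrow> 'v \<Rightarrow> bool) \<Rightarrow> 'v \<Rightarrow> int \<Rightarrow> 'v set" where
  "ballV E p r = {q. int (hop_dist E p q) \<le> r}"

definition loc_comp :: "int \<Rightarrow> int \<Rightarrow> int \<Rightarrow> bool" where
  "loc_comp M a b \<longleftrightarrow> min ((a - b) mod M) ((b - a) mod M) \<le> 1"

definition ominus :: "int \<Rightarrow> int \<Rightarrow> int \<Rightarrow> int" where
  "ominus M b a = (if (b - a) mod M \<le> 1 then (b - a) mod M else - ((a - b) mod M))"

fun delay :: "int \<Rightarrow> ('v \<Rightarrow> int) \<Rightarrow> 'v list \<Rightarrow> int" where
  "delay M r (x # y # xs) = ominus M (r y) (r x) + delay M r (y # xs)"
| "delay M r _ = 0"

definition WU :: "int \<Rightarrow> ('v \<Rightarrow> 'v \<Rightarrow> bool) \<Rightarrow> ('v \<Rightarrow> int) \<Rightarrow> bool" where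
  "WU M E r \<longleftrightarrow> (\<forall>p q. E p q \<longrightarrow> loc_comp M (r p) (r q))"

definition WU0 :: "int \<Rightarrow> ('v \<Rightarrow> 'v \<Rightarrow> bool) \<Rightarrow> ('v \<Rightarrow> int) \<Rightarrow> bool" where
  "WU0 M E r \<longleftrightarrow> WU M E r \<and>
     (\<forall>p q xs ys. walk_betw E p xs q \<longrightarrow> walk_betw E p ys q \<longrightarrow> delay M r xs = delay M r ys)"

text \<open>The common delay \<open>\<delta>_(p,q)\<close> of all paths from p to q (meaningful under WU0).\<close>
definition delta :: "int \<Rightarrow> ('v \<Rightarrow> 'v \<Rightarrow> bool) \<Rightarrow> ('v \<Rightarrow> int) \<Rightarrow> 'v \<Rightarrow> 'v \<Rightarrow> int" where
  "delta M E r p q = delay M r (SOME xs. walk_betw E p xs q)"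

definition enabled :: "int \<Rightarrow> ('v \<Rightarrow> 'v \<Rightarrow> bool) \<Rightarrow> ('v \<Rightarrow> int) \<Rightarrow> 'v \<Rightarrow> bool" where
  "enabled M E r p \<longleftrightarrow> (\<forall>q. E p q \<longrightarrow> r q = r p \<or> r q = (r p + 1) mod M)"

text \<open>One transition \<open>\<gamma>_t \<rightarrow> \<gamma>_{t+1}\<close> with chosen set S; \<open>F\<close> is the big operator
  of \<open>\<oplus>\<close> (f) on finite nonempty sets.\<close>
definition step ::
  "int \<Rightarrow> int \<Rightarrow> ('v \<Rightarrow> 'v \<Rightarrow> bool) \<Rightarrow> ('s \<Rightarrow> 's \<Rightarrow> 's) \<Rightarrow> ('v \<Rightarrow> 's)
   \<Rightarrow> ('v \<Rightarrow> int) \<Rightarrow> ('v \<Rightarrow> 's) \<Rightarrow> ('v \<Rightarrow> 's) \<Rightarrow> 'v set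
   \<Rightarrow> ('v \<Rightarrow> int) \<Rightarrow> ('v \<Rightarrow> 's) \<Rightarrow> ('v \<Rightarrow> 's) \<Rightarrow> bool" where
  "step M rho E f v0 r v1 v2 S r' v1' v2' \<longleftrightarrow>
     S \<noteq> {} \<and> (\<forall>p\<in>S. enabled M E r p) \<and>
     (\<forall>p. if p \<in> S then
            r' p = (r p + 1) mod M \<and>
            (if r p mod (rho + 1) = rho then v1' p = v0 p \<and> v2' p = v0 p
             else v1' p = v2 p \<and>
                  v2' p = semilattice_set.F f
                     (insert (v0 p) ((\<lambda>q. if r q = r p then v2 q else v1 q) ` {q. E p q})))
          else r' p = r p \<and> v1' p = v1 p \<and> v2' p = v2 p)"

text \<open>Lifted (unbounded) clocks, starting from \<open>\<bot>_0 + \<delta>^0_(p0,p)\<close>.\<close>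
primrec lifted :: "int \<Rightarrow> ('v \<Rightarrow> 'v \<Rightarrow> bool) \<Rightarrow> ('v \<Rightarrow> int) \<Rightarrow> 'v \<Rightarrow> (nat \<Rightarrow> 'v set)
                    \<Rightarrow> nat \<Rightarrow> 'v \<Rightarrow> int" where
  "lifted M E r0 p0 S 0 p = r0 p0 + delta M E r0 p0 p"
| "lifted M E r0 p0 S (Suc t) p = lifted M E r0 p0 S t p + (if p \<in> S t then 1 else 0)"

definition tcut :: "int \<Rightarrow> ('v \<Rightarrow> 'v \<Rightarrow> bool) \<Rightarrow> ('v \<Rightarrow> int) \<Rightarrow> 'v \<Rightarrow> (nat \<Rightarrow> 'v set)
                    \<Rightarrow> 'v \<Rightarrow> int \<Rightarrow> nat" where
  "tcut M E r0 p0 S p k = (LEAST t. lifted M E r0 p0 S t p = k)"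

end

theory Submission
  imports Defs
begin

(* Lift every clock to an unbounded integer clock (lifted).  Under WU0 the
   initial lifted clock of q is r0(p0) plus the common path delay from p0 to q, so it is
   congruent to r0(q) modulo M and at most r0(p0) + D.  Every increment preserves the
   congruence, and neighbouring lifted clocks never differ by more than one; hence when a
   process moves, each neighbour's lifted clock is either equal to its own or one ahead,
   and the modular test "q.r = p.r" in the algorithm decides exactly which case holds.
   With K = U(rho+1) (a multiple of rho+1 beyond every initial clock) the tick K-1 is a
   reset tick, and by induction over the execution, for lifted clock K + j (0 <= j <= rho),
   v2 holds the fold of v0 over the j-ball and v1 the fold over the (j-1)-ball.  Fairness
   makes every lifted clock reach K + rho, which gives the theorem. *)

section \<open>Walks, hop distance and balls\<close>

lemma walk_single: "walk_betw E p [p] p"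
  by (simp add: walk_betw_def)

lemma walk_Cons: "E p q \<Longrightarrow> walk_betw E q ys x \<Longrightarrow> walk_betw E p (p # ys) x"
  by (auto simp: walk_betw_def successively_Cons)

lemma walk_snoc: "walk_betw E p xs q \<Longrightarrow> E q y \<Longrightarrow> walk_betw E p (xs @ [y]) y"
  by (auto simp: walk_betw_def successively_append_iff)

lemma walk_length_pos: "walk_betw E p xs q \<Longrightarrow> length xs = Suc (length xs - 1)"
  by (cases xs) (auto simp: walk_betw_def)

lemma walk_Cons_inv:
  assumes "walk_betw E p xs x" "length xs \<ge> 2"
  obtains q ys where "xs = p # ys" "E p q" "walk_betw E q ys x"
proof -
  obtain ys where xs: "xs = p # ys" using assms(1) by (cases xs) (auto simp: walk_betw_def)
  then obtain q zs where "ys = q # zs" using assms(2) by (cases ys) auto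
  then show thesis using that assms(1) xs by (auto simp: walk_betw_def successively_Cons)
qed

lemma hop_dist_shortest:
  assumes "walk_betw E p xs q"
  obtains ys where "walk_betw E p ys q" "length ys = Suc (hop_dist E p q)"
proof -
  have "\<exists>k ys. walk_betw E p ys q \<and> length ys = Suc k"
    using assms walk_length_pos[OF assms] by blast
  from LeastI_ex[OF this] show thesis
    using that unfolding hop_dist_def by blast
qed

lemma hop_dist_le_iff:
  assumes "walk_betw E p xs q"
  shows "hop_dist E p q \<le> n \<longleftrightarrow> (\<exists>ys. walk_betw E p ys q \<and> length ys \<le> Suc n)"
proof
  assume "hop_dist E p q \<le> n"
  moreover obtain ys where "walk_betw E p ys q" "length ys = Suc (hop_dist E p q)"
    using hop_dist_shortest[OF assms] .
  ultimately show "\<exists>ys. walk_betw E p ys q \<and> length ys \<le> Suc n" by auto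
next
  assume "\<exists>ys. walk_betw E p ys q \<and> length ys \<le> Suc n"
  then obtain ys where ys: "walk_betw E p ys q" "length ys \<le> Suc n" by blast
  have "hop_dist E p q \<le> length ys - 1"
    unfolding hop_dist_def using ys(1) walk_length_pos[OF ys(1)] by (intro Least_le) metis
  then show "hop_dist E p q \<le> n" using ys(2) by simp
qed

lemma ballV_iff_walk:
  assumes conn: "\<And>p q. \<exists>xs. walk_betw E p xs q" and "j \<ge> 0"
  shows "x \<in> ballV E q j \<longleftrightarrow> (\<exists>ys. walk_betw E q ys x \<and> length ys \<le> Suc (nat j))"
proof -
  obtain xs where xs: "walk_betw E q xs x" using conn by blast
  have "x \<in> ballV E q j \<longleftrightarrow> hop_dist E q x \<le> nat j"
    using \<open>j \<ge> 0\<close> unfolding ballV_def by auto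
  then show ?thesis using hop_dist_le_iff[OF xs] by blast
qed

lemma ballV_zero:
  assumes conn: "\<And>p q. \<exists>xs. walk_betw E p xs q"
  shows "ballV E p 0 = {p}"
proof -
  have "walk_betw E p ys x \<and> length ys \<le> 1 \<longleftrightarrow> ys = [p] \<and> x = p" for ys x
    by (cases ys) (auto simp: walk_betw_def)
  then show ?thesis
    using ballV_iff_walk[OF conn, of 0] by auto
qed

lemma ballV_center:
  assumes conn: "\<And>p q. \<exists>xs. walk_betw E p xs q" and "j \<ge> 0"
  shows "p \<in> ballV E p j"
  using ballV_iff_walk[OF conn \<open>j \<ge> 0\<close>] walk_single by fastforce

lemma walk_le_Suc_iff:
  "(\<exists>xs. walk_betw E p xs x \<and> length xs \<le> Suc (Suc n))
     \<longleftrightarrow> x = p \<or> (\<exists>q. E p q \<and> (\<exists>ys. walk_betw E q ys x \<and> length ys \<le> Suc n))"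
proof
  assume "\<exists>xs. walk_betw E p xs x \<and> length xs \<le> Suc (Suc n)"
  then obtain xs where xs: "walk_betw E p xs x" "length xs \<le> Suc (Suc n)" by blast
  show "x = p \<or> (\<exists>q. E p q \<and> (\<exists>ys. walk_betw E q ys x \<and> length ys \<le> Suc n))"
  proof (cases "length xs \<ge> 2")
    case True
    then obtain q ys where "xs = p # ys" "E p q" "walk_betw E q ys x"
      using walk_Cons_inv[OF xs(1) True] by blast
    then show ?thesis using xs(2) by auto
  next
    case False
    then have "length xs = 1" using xs(1) by (cases xs) (auto simp: walk_betw_def Suc_le_eq)
    then show ?thesis using xs(1) by (auto simp: walk_betw_def length_Suc_conv)
  qed
next
  assume "x = p \<or> (\<exists>q. E p q \<and> (\<exists>ys. walk_betw E q ys x \<and> length ys \<le> Suc n))"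
  then show "\<exists>xs. walk_betw E p xs x \<and> length xs \<le> Suc (Suc n)"
  proof
    assume "x = p"
    then show ?thesis using walk_single[of E p] by (intro exI[of _ "[p]"]) simp
  next
    assume "\<exists>q. E p q \<and> (\<exists>ys. walk_betw E q ys x \<and> length ys \<le> Suc n)"
    then obtain q ys where "E p q" "walk_betw E q ys x" "length ys \<le> Suc n" by blast
    then show ?thesis using walk_Cons[of E p q ys x] by (intro exI[of _ "p # ys"]) simp
  qed
qed

text \<open>The recursion behind the algorithm: a ball of radius j+1 is its centre together
  with the balls of radius j around the neighbours.\<close>
lemma ballV_Suc:
  assumes conn: "\<And>p q. \<exists>xs. walk_betw E p xs q" and j: "j \<ge> 0"
  shows "ballV E p (j + 1) = insert p (\<Union>q\<in>{q. E p q}. ballV E q j)"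
proof (intro set_eqI)
  fix x
  have "nat (j + 1) = Suc (nat j)" using j by simp
  then have "x \<in> ballV E p (j + 1)
      \<longleftrightarrow> (\<exists>xs. walk_betw E p xs x \<and> length xs \<le> Suc (Suc (nat j)))"
    using ballV_iff_walk[OF conn, of "j + 1" x p] j by simp
  also have "\<dots> \<longleftrightarrow> x = p \<or> (\<exists>q. E p q \<and> x \<in> ballV E q j)"
    unfolding walk_le_Suc_iff ballV_iff_walk[OF conn j] ..
  finally show "x \<in> ballV E p (j + 1) \<longleftrightarrow> x \<in> insert p (\<Union>q\<in>{q. E p q}. ballV E q j)"
    by blast
qed

lemma semilattice_F_UN:
  assumes sl: "semilattice f" and N: "finite N"
    and A: "\<And>q. q \<in> N \<Longrightarrow> finite (A q) \<and> A q \<noteq> {}"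
  shows "semilattice_set.F f (insert a ((\<lambda>q. semilattice_set.F f (A q)) ` N))
       = semilattice_set.F f (insert a (\<Union>q\<in>N. A q))"
  using N A
proof (induction N rule: finite_induct)
  case empty
  then show ?case by simp
next
  case (insert n N)
  interpret semilattice_set f by (rule semilattice_set.intro[OF sl])
  have fin: "finite (\<Union>q\<in>N. A q)" using insert.hyps(1) insert.prems by auto
  have "F (insert a ((\<lambda>q. F (A q)) ` insert n N)) = F (insert (F (A n)) (insert a ((\<lambda>q. F (A q)) ` N)))"
    by (simp add: insert_commute)
  also have "\<dots> = f (F (A n)) (F (insert a ((\<lambda>q. F (A q)) ` N)))"
    using insert.hyps by (simp add: insert)
  also have "\<dots> = f (F (A n)) (F (insert a (\<Union>q\<in>N. A q)))"
    using insert.IH insert.prems by simp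
  also have "\<dots> = F (A n \<union> insert a (\<Union>q\<in>N. A q))"
    using insert.prems[of n] fin by (subst union) auto
  also have "A n \<union> insert a (\<Union>q\<in>N. A q) = insert a (\<Union>q\<in>insert n N. A q)" by blast
  finally show ?case .
qed

definition ball_fold :: "('v \<Rightarrow> 'v \<Rightarrow> bool) \<Rightarrow> ('s \<Rightarrow> 's \<Rightarrow> 's) \<Rightarrow> ('v \<Rightarrow> 's) \<Rightarrow> 'v \<Rightarrow> int \<Rightarrow> 's" where
  "ball_fold E f v0 q j = semilattice_set.F f (v0 ` ballV E q j)"

lemma ball_fold_zero:
  assumes "\<And>p q. \<exists>xs. walk_betw E p xs q" and "semilattice f"
  shows "ball_fold E f v0 q 0 = v0 q"
  using ballV_zero[OF assms(1)] semilattice_set.singleton[OF semilattice_set.intro[OF assms(2)]]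
  by (simp add: ball_fold_def)

lemma ball_fold_Suc:
  fixes E :: "'v::finite \<Rightarrow> 'v \<Rightarrow> bool"
  assumes conn: "\<And>p q. \<exists>xs. walk_betw E p xs q" and sl: "semilattice f" and j: "j \<ge> 0"
  shows "ball_fold E f v0 q (j + 1)
       = semilattice_set.F f (insert (v0 q) ((\<lambda>x. ball_fold E f v0 x j) ` {x. E q x}))"
proof -
  have "semilattice_set.F f (insert (v0 q) ((\<lambda>x. ball_fold E f v0 x j) ` {x. E q x}))
      = semilattice_set.F f (insert (v0 q) (\<Union>x\<in>{x. E q x}. v0 ` ballV E x j))"
    unfolding ball_fold_def
    by (rule semilattice_F_UN[OF sl]) (use ballV_center[OF conn j] in auto)
  also have "insert (v0 q) (\<Union>x\<in>{x. E q x}. v0 ` ballV E x j) = v0 ` ballV E q (j + 1)"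
    unfolding ballV_Suc[OF conn j] by blast
  finally show ?thesis unfolding ball_fold_def by simp
qed

section \<open>Clock arithmetic\<close>

lemma ominus_mod: "M > 0 \<Longrightarrow> ominus M b a mod M = (b - a) mod M"
  by (auto simp: ominus_def mod_minus_eq)

lemma ominus_le_one:
  assumes "M > 0" shows "ominus M b a \<le> 1"
proof -
  have "0 \<le> (a - b) mod M" using assms by simp
  then show ?thesis by (auto simp: ominus_def)
qed

lemma ominus_bounds: "M > 0 \<Longrightarrow> loc_comp M a b \<Longrightarrow> \<bar>ominus M b a\<bar> \<le> 1"
  by (auto simp: ominus_def loc_comp_def)

lemma delay_mod: "M > 0 \<Longrightarrow> xs \<noteq> [] \<Longrightarrow> delay M r xs mod M = (r (last xs) - r (hd xs)) mod M"
proof (induction M r xs rule: delay.induct)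
  case (1 M r x y xs)
  have "delay M r (x # y # xs) mod M = (ominus M (r y) (r x) mod M + delay M r (y # xs) mod M) mod M"
    by (simp add: mod_add_eq)
  also have "\<dots> = ((r y - r x) mod M + (r (last (y # xs)) - r y) mod M) mod M"
    using 1 by (simp add: ominus_mod)
  also have "\<dots> = (r (last (x # y # xs)) - r (hd (x # y # xs))) mod M"
    by (simp add: mod_add_eq)
  finally show ?case .
qed auto

lemma delay_le_edges: "M > 0 \<Longrightarrow> xs \<noteq> [] \<Longrightarrow> delay M r xs \<le> int (length xs) - 1"
proof (induction M r xs rule: delay.induct)
  case (1 M r x y xs)
  then show ?case using ominus_le_one[of M "r y" "r x"] by auto
qed auto

lemma delay_snoc: "xs \<noteq> [] \<Longrightarrow> delay M r (xs @ [y]) = delay M r xs + ominus M (r y) (r (last xs))"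
  by (induction M r xs rule: delay.induct) auto

lemma mod_consecutive_distinct:
  fixes M a :: int
  assumes "M \<ge> 3"
  shows "(a - 1) mod M \<noteq> a mod M" "(a - 1) mod M \<noteq> (a + 1) mod M" "(a + 1) mod M \<noteq> a mod M"
proof -
  have "\<not> M dvd 1" "\<not> M dvd 2"
    using assms zdvd_imp_le[of M 1] zdvd_imp_le[of M 2] by auto
  then show "(a - 1) mod M \<noteq> a mod M" "(a - 1) mod M \<noteq> (a + 1) mod M" "(a + 1) mod M \<noteq> a mod M"
    by (auto simp: mod_eq_dvd_iff dvd_minus_iff)
qed

lemma mod_pred_multiple:
  fixes K n :: int
  assumes "n > 0" "K mod n = 0"
  shows "(K - 1) mod n = n - 1"
proof -
  obtain m where "K = n * m" using assms(2) by (metis mod_0_imp_dvd dvd_def)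
  then have "(K - 1) mod n = ((n - 1) + (m - 1) * n) mod n" by (simp add: algebra_simps)
  also have "\<dots> = (n - 1) mod n" by (rule mod_mult_self1)
  also have "\<dots> = n - 1" using assms(1) by (intro mod_pos_pos_trivial) auto
  finally show ?thesis .
qed

lemma mod_above_multiple:
  fixes K n c :: int
  assumes "K mod n = 0" "K \<le> c" "c < K + n"
  shows "c mod n = c - K"
proof -
  have "c mod n = (c - K mod n) mod n" using assms(1) by simp
  also have "\<dots> = (c - K) mod n" by (rule mod_diff_right_eq)
  also have "\<dots> = c - K" using assms(2,3) by simp
  finally show ?thesis .
qed

lemma discrete_ivt:
  fixes g :: "nat \<Rightarrow> int"
  assumes "\<And>t. g (Suc t) \<le> g t + 1" "g 0 \<le> k" "k \<le> g T"
  shows "\<exists>t. g t = k"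
  using assms(3)
proof (induction T)
  case 0
  then show ?case using assms(2) by (intro exI[of _ 0]) simp
next
  case (Suc T)
  then show ?case using assms(1)[of T] by (cases "k \<le> g T") (auto intro: exI[of _ "Suc T"])
qed

lemma step_active:
  assumes "step M rho E f v0 r v1 v2 S r' v1' v2'" "p \<in> S"
  shows "enabled M E r p" "r' p = (r p + 1) mod M"
    and "r p mod (rho + 1) = rho \<Longrightarrow> v1' p = v0 p \<and> v2' p = v0 p"
    and "r p mod (rho + 1) \<noteq> rho \<Longrightarrow> v1' p = v2 p \<and>
           v2' p = semilattice_set.F f (insert (v0 p) ((\<lambda>q. if r q = r p then v2 q else v1 q) ` {q. E p q}))"
  using assms(2) spec[OF conjunct2[OF conjunct2[OF assms(1)[unfolded step_def]]], of p]
    assms(1)[unfolded step_def]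
  by auto

lemma step_idle:
  assumes "step M rho E f v0 r v1 v2 S r' v1' v2'" "p \<notin> S"
  shows "r' p = r p" "v1' p = v1 p" "v2' p = v2 p"
  using assms(2) spec[OF conjunct2[OF conjunct2[OF assms(1)[unfolded step_def]]], of p]
  by auto

section \<open>Executions\<close>

locale execution =
  fixes E :: "'v::finite \<Rightarrow> 'v \<Rightarrow> bool"
    and f :: "'s \<Rightarrow> 's \<Rightarrow> 's"
    and rho M :: int
    and r :: "nat \<Rightarrow> 'v \<Rightarrow> int"
    and v0 :: "'v \<Rightarrow> 's"
    and v1 v2 :: "nat \<Rightarrow> 'v \<Rightarrow> 's"
    and S :: "nat \<Rightarrow> 'v set"
    and p0 :: 'v
  assumes sym: "\<And>p q. E p q \<Longrightarrow> E q p"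
    and conn: "\<And>p q. \<exists>xs. walk_betw E p xs q"
    and rho: "rho \<ge> 0"
    and M: "M \<ge> 3" "(rho + 1) dvd M"
    and sl: "semilattice f"
    and r0_range: "\<And>p. 0 \<le> r 0 p \<and> r 0 p < M"
    and exec: "\<And>t. step M rho E f v0 (r t) (v1 t) (v2 t) (S t) (r (Suc t)) (v1 (Suc t)) (v2 (Suc t))"
    and wu0: "WU0 M E (r 0)"
begin

abbreviation L :: "nat \<Rightarrow> 'v \<Rightarrow> int" where
  "L \<equiv> lifted M E (r 0) p0 S"

abbreviation B :: "'v \<Rightarrow> int \<Rightarrow> 's" where
  "B \<equiv> ball_fold E f v0"

lemma M_pos: "M > 0"
  using M by simp

lemma delta_eq_delay: "walk_betw E p0 xs q \<Longrightarrow> delta M E (r 0) p0 q = delay M (r 0) xs"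
  using someI_ex[OF conn] wu0 unfolding WU0_def delta_def by blast

text \<open>Taking a shortest path shows that no initial delay from p0 exceeds the diameter.\<close>
lemma delta_le_diameter: "delta M E (r 0) p0 q \<le> int (diameter E)"
proof -
  obtain xs where xs: "walk_betw E p0 xs q" "length xs = Suc (hop_dist E p0 q)"
    using conn hop_dist_shortest by meson
  have "finite {hop_dist E p q | p q. True}"
    using finite_image_set2[of "\<lambda>_. True" "\<lambda>_. True" "hop_dist E"] by simp
  then have "hop_dist E p0 q \<le> diameter E"
    unfolding diameter_def by (rule Max_ge) blast
  moreover have "delay M (r 0) xs \<le> int (hop_dist E p0 q)"
    using delay_le_edges[OF M_pos, of xs] xs by (auto simp: walk_betw_def)
  ultimately show ?thesis using delta_eq_delay[OF xs(1)] by simp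
qed

lemma r_eq_L_mod: "r t q = L t q mod M"
proof (induction t)
  case 0
  obtain xs where xs: "walk_betw E p0 xs q" using conn by blast
  then have delta_mod: "delta M E (r 0) p0 q mod M = (r 0 q - r 0 p0) mod M"
    using delta_eq_delay delay_mod[OF M_pos] by (auto simp: walk_betw_def)
  have "L 0 q mod M = (r 0 p0 + delta M E (r 0) p0 q mod M) mod M"
    by (simp add: mod_add_right_eq)
  also have "\<dots> = r 0 q mod M"
    unfolding delta_mod by (simp add: mod_add_right_eq)
  finally show ?case using r0_range[of q] by simp
next
  case (Suc t)
  show ?case
  proof (cases "q \<in> S t")
    case True
    then show ?thesis using Suc step_active(2)[OF exec True] by (simp add: mod_add_left_eq)
  next
    case False
    then show ?thesis using Suc step_idle(1)[OF exec False] by simp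
  qed
qed

lemma enabled_neighbour_clock:
  assumes "enabled M E (r t) p" "E p q" "\<bar>L t p - L t q\<bar> \<le> 1"
  shows "L t q = L t p \<or> L t q = L t p + 1"
proof -
  have "r t q = r t p \<or> r t q = (r t p + 1) mod M"
    using assms unfolding enabled_def by blast
  then have "L t q mod M = L t p mod M \<or> L t q mod M = (L t p + 1) mod M"
    by (simp add: r_eq_L_mod mod_add_left_eq)
  then have "L t q \<noteq> L t p - 1"
    using mod_consecutive_distinct[OF M(1), of "L t p"] by auto
  then show ?thesis using assms(3) by auto
qed

lemma neighbour_clocks_close: "E p q \<Longrightarrow> \<bar>L t p - L t q\<bar> \<le> 1"
proof (induction t arbitrary: p q)
  case 0
  obtain xs where xs: "walk_betw E p0 xs p" using conn by blast
  then have "xs \<noteq> []" "last xs = p" by (auto simp: walk_betw_def)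
  have "delta M E (r 0) p0 q = delay M (r 0) (xs @ [q])"
    using delta_eq_delay walk_snoc[OF xs 0] by blast
  also have "\<dots> = delta M E (r 0) p0 p + ominus M (r 0 q) (r 0 p)"
    using delay_snoc[OF \<open>xs \<noteq> []\<close>] delta_eq_delay[OF xs] \<open>last xs = p\<close> by simp
  finally have "L 0 q = L 0 p + ominus M (r 0 q) (r 0 p)" by simp
  moreover have "loc_comp M (r 0 p) (r 0 q)"
    using wu0 0 unfolding WU0_def WU_def by blast
  ultimately show ?case using ominus_bounds[OF M_pos] by fastforce
next
  case (Suc t)
  have IH: "\<bar>L t p - L t q\<bar> \<le> 1" "\<bar>L t q - L t p\<bar> \<le> 1"
    using Suc sym by auto
  note close = enabled_neighbour_clock[OF step_active(1)[OF exec]]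
  show ?case
    using close[OF _ Suc.prems IH(1)] close[OF _ sym[OF Suc.prems] IH(2)] IH by auto
qed

lemma active_neighbour_clock:
  "p \<in> S t \<Longrightarrow> E p q \<Longrightarrow> L t q = L t p \<or> L t q = L t p + 1"
  using enabled_neighbour_clock[OF step_active(1)[OF exec]] neighbour_clocks_close by blast

lemma active_same_clock_iff:
  assumes "p \<in> S t" "E p q"
  shows "r t q = r t p \<longleftrightarrow> L t q = L t p"
  using active_neighbour_clock[OF assms] mod_consecutive_distinct(3)[OF M(1), of "L t p"]
  by (auto simp: r_eq_L_mod)

text \<open>Since rho + 1 divides M, the reset test on the real clock is the same test on the lifted one.\<close>
lemma reset_iff: "r t p mod (rho + 1) = rho \<longleftrightarrow> L t p mod (rho + 1) = rho"
  using M(2) by (simp add: r_eq_L_mod mod_mod_cancel)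

lemma clock_reaches:
  assumes fair: "\<And>t. \<exists>t'\<ge>t. p \<in> S t'" and "L 0 p \<le> k"
  shows "\<exists>t. L t p = k"
proof -
  have mono: "L t p \<le> L t' p" if "t \<le> t'" for t t'
    using that by (induction t' rule: dec_induct) auto
  have unbounded: "\<exists>t. L t p \<ge> L 0 p + int n" for n
  proof (induction n)
    case (Suc n)
    then obtain t where t: "L t p \<ge> L 0 p + int n" by blast
    obtain t' where "t' \<ge> t" "p \<in> S t'" using fair by blast
    then have "L (Suc t') p \<ge> L 0 p + int (Suc n)" using t mono[of t t'] by simp
    then show ?case by blast
  qed (auto intro: exI[of _ 0])
  obtain T where "L T p \<ge> k"
    using unbounded[of "nat (k - L 0 p)"] \<open>L 0 p \<le> k\<close> by auto
  then show ?thesis using discrete_ivt[of "\<lambda>t. L t p"] \<open>L 0 p \<le> k\<close> by simp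
qed

definition window_inv :: "int \<Rightarrow> nat \<Rightarrow> 'v \<Rightarrow> bool" where
  "window_inv K t q \<longleftrightarrow>
     (K \<le> L t q \<and> L t q \<le> K + rho \<longrightarrow> v2 t q = B q (L t q - K)) \<and>
     (K + 1 \<le> L t q \<and> L t q \<le> K + rho \<longrightarrow> v1 t q = B q (L t q - K - 1)) \<and>
     (L t q = K \<longrightarrow> v1 t q = v0 q)"

lemma window_inv_inner_step:
  assumes inv: "\<And>x. window_inv K t x" and qS: "q \<in> S t"
    and K: "K mod (rho + 1) = 0" and c: "K \<le> L t q" "L t q \<le> K + rho - 1"
  shows "window_inv K (Suc t) q"
proof -
  define c where "c = L t q"
  have "L t q mod (rho + 1) = L t q - K"
    using mod_above_multiple[OF K] c by simp
  then have no_reset: "r t q mod (rho + 1) \<noteq> rho" using c reset_iff by simp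
  have regs: "(if r t x = r t q then v2 t x else v1 t x) = B x (c - K)" if "E q x" for x
    using active_same_clock_iff[OF qS that] active_neighbour_clock[OF qS that] inv[of x] c
    unfolding window_inv_def c_def by auto
  have "(\<lambda>x. if r t x = r t q then v2 t x else v1 t x) ` {x. E q x} = (\<lambda>x. B x (c - K)) ` {x. E q x}"
    using regs by (intro image_cong) auto
  then have "v2 (Suc t) q = semilattice_set.F f (insert (v0 q) ((\<lambda>x. B x (c - K)) ` {x. E q x}))"
    using step_active(4)[OF exec qS no_reset] by simp
  also have "\<dots> = B q (c - K + 1)"
    using ball_fold_Suc[OF conn sl] c c_def by simp
  finally have "v2 (Suc t) q = B q (c - K + 1)" .
  moreover have "v1 (Suc t) q = B q (c - K)"
    using step_active(4)[OF exec qS no_reset] inv[of q] c unfolding window_inv_def c_def by simp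
  ultimately show ?thesis
    using qS c unfolding window_inv_def c_def by (simp add: algebra_simps)
qed

text \<open>If K is a multiple of rho + 1 above every initial lifted clock, the invariant holds
  throughout the execution: tick K - 1 is a reset, and the ticks of the window are rounds.\<close>
lemma window_inv_holds:
  assumes K: "K mod (rho + 1) = 0" and init: "\<And>q. L 0 q < K"
  shows "window_inv K t q"
proof (induction t arbitrary: q)
  case 0
  then show ?case using init[of q] unfolding window_inv_def by simp
next
  case (Suc t)
  show ?case
  proof (cases "q \<in> S t")
    case False
    then show ?thesis
      using Suc step_idle[OF exec False] unfolding window_inv_def by simp
  next
    case qS: True
    consider "L t q + 1 < K \<or> L t q + 1 > K + rho" | "L t q = K - 1"
      | "K \<le> L t q \<and> L t q \<le> K + rho - 1" by linarith
    then show ?thesis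
    proof cases
      case 1
      then show ?thesis using qS rho unfolding window_inv_def by auto
    next
      case 2
      have "(K - 1) mod (rho + 1) = rho" using mod_pred_multiple[OF _ K] rho by simp
      then have "r t q mod (rho + 1) = rho" using reset_iff 2 by simp
      then show ?thesis
        using step_active(3)[OF exec qS] ball_fold_zero[OF conn sl] qS 2
        unfolding window_inv_def by auto
    next
      case 3
      then show ?thesis using window_inv_inner_step[OF Suc qS K] by blast
    qed
  qed
qed

lemma v2_at_window_end:
  assumes "K mod (rho + 1) = 0" "\<And>q. L 0 q < K" "L t p = K + rho"
  shows "v2 t p = B p rho"
  using window_inv_holds[OF assms(1,2), of t p] assms(3) rho unfolding window_inv_def by simp

end

theorem mainTheorem6:
  fixes E :: "'v::finite \<Rightarrow> 'v \<Rightarrow> bool"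
    and f :: "'s \<Rightarrow> 's \<Rightarrow> 's"
    and rho M U :: int
    and r :: "nat \<Rightarrow> 'v \<Rightarrow> int"
    and v0 :: "'v \<Rightarrow> 's"
    and v1 v2 :: "nat \<Rightarrow> 'v \<Rightarrow> 's"
    and S :: "nat \<Rightarrow> 'v set"
    and p0 :: 'v
  assumes card: "card (UNIV :: 'v set) \<ge> 2"
    and sym: "\<And>p q. E p q \<Longrightarrow> E q p"
    and irrefl: "\<And>p. \<not> E p p"
    and conn: "\<And>p q. \<exists>xs. walk_betw E p xs q"
    and rho: "rho \<ge> 1"
    and M: "M \<ge> 3" "(rho + 1) dvd M"
    and sl: "semilattice f"
    and r0_range: "\<And>p. 0 \<le> r 0 p \<and> r 0 p < M"
    and exec: "\<And>t. step M rho E f v0 (r t) (v1 t) (v2 t) (S t) (r (Suc t)) (v1 (Suc t)) (v2 (Suc t))"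
    and fair: "\<And>p t. \<exists>t'\<ge>t. p \<in> S t'"
    and wu0: "WU0 M E (r 0)"
    and p0: "\<And>q. delta M E (r 0) p0 q \<ge> 0"
    and U: "U * (rho + 1) \<ge> r 0 p0 + int (diameter E) + 1"
  shows "\<forall>p. v2 (tcut M E (r 0) p0 S p (U * (rho + 1) + rho)) p
              = semilattice_set.F f (v0 ` ballV E p rho)"
proof
  fix p
  interpret execution E f rho M r v0 v1 v2 S p0
    by (rule execution.intro) (use sym conn rho M sl r0_range exec wu0 in auto)
  define K where "K = U * (rho + 1)"
  have K: "K mod (rho + 1) = 0" by (simp add: K_def)
  have init: "L 0 q < K" for q
    using delta_le_diameter[of q] U unfolding K_def lifted.simps(1) by linarith
  obtain t where "L t p = K + rho"
    using clock_reaches[OF fair, of p "K + rho"] init[of p] rho by force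
  then have "L (tcut M E (r 0) p0 S p (K + rho)) p = K + rho"
    unfolding tcut_def by (rule LeastI)
  then have "v2 (tcut M E (r 0) p0 S p (K + rho)) p = B p rho"
    by (rule v2_at_window_end[OF K init])
  then show "v2 (tcut M E (r 0) p0 S p (U * (rho + 1) + rho)) p = semilattice_set.F f (v0 ` ballV E p rho)"
    unfolding K_def ball_fold_def .
qed

end
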